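(* Let $m_0$ be an initial model, $a$ a (comparison-based) black-box optimization algorithm run inside the BBoxER framework described in the context, $\omega$ a fixed random seed, $b\in\mathbb{N}$ a budget, $s$ the dataset size and $\epsilon>0$. Assume that $N(\omega,a,b)$ is finite and that there is $\delta_{1,\epsilon}$ such that for every parameter $x$, $$P_{\omega_D}\big(|\widehat L(x)-L(x)|>\epsilon\big)\le \delta_{1,\epsilon}.$$ Then $$P_{\omega_D}\big(|\widehat L(\widehat x)-L(\widehat x)|>\epsilon\big)\le N(\omega,a,b)\cdot \delta_{1,\epsilon},$$ and $$P_{\omega_D}\Big(\sup_{1\le i\le b}|\widehat L(x_i)-L(x_i)|>\epsilon\Big)\le b\cdot N(\omega,a,b)\cdot \delta_{1,\epsilon}.$$
   Context: BBoxER framework. Fix an initial model $m_0$ and a map $(m_0,x)\mapsto \mathrm{modified}(m_0,x)$ sending a parameter $x$ to a model. Let $\mathcal D$ be the class of datasets $D$ of size $s$ drawn from a probability distribution $F$ on $\mathcal X\times\mathcal Y$; $\omega_D$ denotes the randomness of the draw of $D$. A black-box optimization algorithm $a$, deterministic given its seed $\omega$, is run with budget $b$ on $D$: it is initialized from $\omega$; at each iteration $i=1,\dots,b$ it proposes a parameter $x_i$ and model $m_i=\mathrm{modified}(m_0,x_i)$, declares a finite number $k_i\ge1$ of possible comparison outcomes, then receives $\mathrm{choice}_i\in\{1,\dots,k_i\}$ computed by comparing $m_1,\dots,m_i$ on $D$; after $b$ iterations it recommends $\widehat x$ and outputs $\mathrm{modified}(m_0,\widehat x)$. The algorithm accesses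 $D$ only through the values $\mathrm{choice}_i$, so $x_i$ and $k_i$ are deterministic functions of $(\omega,a,b,\mathrm{choice}_1,\dots,\mathrm{choice}_{i-1})$ and $\widehat x$ is a deterministic function of $(\omega,a,b,\mathrm{choice}_1,\dots,\mathrm{choice}_b)$. The internal state after $b$ iterations is $S(\omega,D,a,b)=(\omega,\mathrm{choice}_1,\dots,\mathrm{choice}_b)$, and $N(\omega,a,b)=\operatorname{Card}\{S(\omega,D,a,b): D\in\mathcal D\}$. $L(x)$ denotes the generalization (expected) error under $F$ of $\mathrm{modified}(m_0,x)$ and $\widehat L(x)$ its empirical error on $D$. *)

theory Defs
  imports "HOL-Probability.Probability"
begin

text \<open>A black-box algorithm \<open>a\<close> is given by three deterministic
functions of (seed, budget, list of previous choices):
  \<open>propose\<close>: the proposed parameter x_i,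
  \<open>kk\<close>:   the number k_i of declared comparison outcomes,
  \<open>recommend\<close>:  the recommended parameter after b iterations.
\<open>cmp k ms D\<close> is the comparison outcome (in 1..k) obtained by comparing the models
\<open>ms = [m_1,...,m_i]\<close> on the dataset D.\<close>

primrec choices ::
  "('w \<Rightarrow> nat \<Rightarrow> nat list \<Rightarrow> 'x) \<Rightarrow> ('w \<Rightarrow> nat \<Rightarrow> nat list \<Rightarrow> nat) \<Rightarrow> ('x \<Rightarrow> 'm) \<Rightarrow>
   (nat \<Rightarrow> 'm list \<Rightarrow> 'd \<Rightarrow> nat) \<Rightarrow> 'w \<Rightarrow> nat \<Rightarrow> 'd \<Rightarrow> nat \<Rightarrow> nat list" where
  "choices propose kk modified cmp \<omega> b D 0 = []"
| "choices propose kk modified cmp \<omega> b D (Suc i) =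
     (let cs = choices propose kk modified cmp \<omega> b D i
      in cs @ [cmp (kk \<omega> b cs) (map (\<lambda>j. modified (propose \<omega> b (take j cs))) [0..<Suc i]) D])"

definition state where
  "state propose kk modified cmp \<omega> b D = (\<omega>, choices propose kk modified cmp \<omega> b D b)"

definition Nstates where
  "Nstates propose kk modified cmp \<omega> b Ds = card ((state propose kk modified cmp \<omega> b) ` Ds)"

text \<open>i-th proposed parameter x_i (1 \<le> i \<le> b) and the recommendation.\<close>
definition xparam where
  "xparam propose kk modified cmp \<omega> b D i =
     propose \<omega> b (take (i - 1) (choices propose kk modified cmp \<omega> b D b))"

definition xhat where
  "xhat propose recommend kk modified cmp \<omega> b D = recommend \<omega> b (choices propose kk modified cmp \<omega> b D b)"

definition gen_err :: "('z measure) \<Rightarrow> ('m \<Rightarrow> 'z \<Rightarrow> real) \<Rightarrow> ('x \<Rightarrow> 'm) \<Rightarrow> 'x \<Rightarrow> real" where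
  "gen_err F loss modified x = (\<integral>z. loss (modified x) z \<partial>F)"

definition emp_err :: "nat \<Rightarrow> ('m \<Rightarrow> 'z \<Rightarrow> real) \<Rightarrow> ('x \<Rightarrow> 'm) \<Rightarrow> (nat \<Rightarrow> 'z) \<Rightarrow> 'x \<Rightarrow> real" where
  "emp_err s loss modified D x = (\<Sum>j<s. loss (modified x) (D j)) / real s"

end

theory Submission
  imports Defs
begin

text \<open>The algorithm sees the dataset \<open>D\<close> only through its internal state, which takes at most
\<open>N(\<omega>,a,b)\<close> values.  The recommendation \<open>xhat\<close> and each proposal \<open>x\<^sub>i\<close> are functions of that
state, so the event that \<open>xhat\<close> generalizes badly is covered by the bad events of the \<open>N\<close> fixed
parameters it could possibly be, and the union bound gives \<open>N \<delta>\<close>; for the proposals a second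
union bound over \<open>i \<in> {1..b}\<close> contributes the factor \<open>b\<close>.\<close>

lemma measure_UN_le_card_mult:
  assumes "finite I"
    and "\<And>i. i \<in> I \<Longrightarrow> A i \<in> sets M"
    and "\<And>i. i \<in> I \<Longrightarrow> measure M (A i) \<le> d"
  shows "measure M (\<Union>i\<in>I. A i) \<le> real (card I) * d"
proof -
  have "measure M (\<Union>i\<in>I. A i) \<le> (\<Sum>i\<in>I. measure M (A i))"
    using assms(1,2) by (rule measure_UNION_le)
  also have "\<dots> \<le> (\<Sum>i\<in>I. d)"
    using assms(3) by (rule sum_mono)
  finally show ?thesis
    by simp
qed

lemma measure_event_at_statistic_le:
  assumes "finite_measure M"
    and "finite (g ` space M)"
    and "\<And>c. c \<in> g ` space M \<Longrightarrow> B c \<in> sets M"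
    and "\<And>c. c \<in> g ` space M \<Longrightarrow> measure M (B c) \<le> d"
  shows "measure M {D \<in> space M. D \<in> B (g D)} \<le> real (card (g ` space M)) * d"
proof -
  have "(\<Union>c\<in>g ` space M. B c) \<in> sets M"
    using assms(2,3) by (rule sets.finite_UN)
  then have "measure M {D \<in> space M. D \<in> B (g D)} \<le> measure M (\<Union>c\<in>g ` space M. B c)"
    using assms(1) by (intro finite_measure.finite_measure_mono) auto
  also have "\<dots> \<le> real (card (g ` space M)) * d"
    using assms(2-4) by (rule measure_UN_le_card_mult)
  finally show ?thesis .
qed

lemma emp_err_measurable [measurable]:
  assumes "\<And>m. loss m \<in> borel_measurable F"
  shows "(\<lambda>D. emp_err s loss modified D x) \<in> borel_measurable (PiM {..<s} (\<lambda>_. F))"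
  unfolding emp_err_def using assms by measurable

theorem theorem1:
  fixes F :: "('xx \<times> 'yy) measure"
    and loss :: "'m \<Rightarrow> ('xx \<times> 'yy) \<Rightarrow> real"
    and modified :: "'x \<Rightarrow> 'm"
    and propose :: "'w \<Rightarrow> nat \<Rightarrow> nat list \<Rightarrow> 'x"
    and kk :: "'w \<Rightarrow> nat \<Rightarrow> nat list \<Rightarrow> nat"
    and recommend :: "'w \<Rightarrow> nat \<Rightarrow> nat list \<Rightarrow> 'x"
    and cmp :: "nat \<Rightarrow> 'm list \<Rightarrow> (nat \<Rightarrow> 'xx \<times> 'yy) \<Rightarrow> nat"
    and \<omega> :: 'w and b s :: nat and \<epsilon> \<delta> :: real
  defines "M \<equiv> PiM {..<s} (\<lambda>_. F)"
  assumes F: "prob_space F"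
    and loss_meas: "\<And>m. loss m \<in> borel_measurable F"
    and cmp_meas: "\<And>k ms. cmp k ms \<in> measurable M (count_space UNIV)"
    and k_pos: "\<And>cs. kk \<omega> b cs \<ge> 1"
    and cmp_range: "\<And>k ms D. k \<ge> 1 \<Longrightarrow> cmp k ms D \<in> {1..k}"
    and eps: "\<epsilon> > 0"
    and N_fin: "finite ((state propose kk modified cmp \<omega> b) ` space M)"
    and delta: "\<And>x. measure M {D \<in> space M.
                  \<bar>emp_err s loss modified D x - gen_err F loss modified x\<bar> > \<epsilon>} \<le> \<delta>"
  shows "(measure M {D \<in> space M.
           \<bar>emp_err s loss modified D (xhat propose recommend kk modified cmp \<omega> b D)
            - gen_err F loss modified (xhat propose recommend kk modified cmp \<omega> b D)\<bar> > \<epsilon>}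
         \<le> real (Nstates propose kk modified cmp \<omega> b (space M)) * \<delta>) \<and>
         (measure M {D \<in> space M. \<exists>i\<in>{1..b}.
           \<bar>emp_err s loss modified D (xparam propose kk modified cmp \<omega> b D i)
            - gen_err F loss modified (xparam propose kk modified cmp \<omega> b D i)\<bar> > \<epsilon>}
         \<le> real b * real (Nstates propose kk modified cmp \<omega> b (space M)) * \<delta>)"
proof -
  define S where "S = state propose kk modified cmp \<omega> b"
  define Bad where "Bad x = {D \<in> space M.
                  \<bar>emp_err s loss modified D x - gen_err F loss modified x\<bar> > \<epsilon>}" for x
  have "prob_space M"
    unfolding M_def using F by (intro prob_space_PiM) auto
  then have "finite_measure M"
    by (simp add: prob_space_def)
  note statistic_bound = measure_event_at_statistic_le[OF this N_fin[folded S_def]]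
  have Bad_sets: "Bad x \<in> sets M" for x
    unfolding Bad_def M_def using loss_meas by measurable
  have "measure M {D \<in> space M. D \<in> Bad (recommend \<omega> b (snd (S D)))} \<le> real (card (S ` space M)) * \<delta>"
    using Bad_sets delta unfolding Bad_def by (rule statistic_bound)
  moreover have "measure M {D \<in> space M. D \<in> (\<Union>i\<in>{1..b}. Bad (propose \<omega> b (take (i - 1) (snd (S D)))))}
      \<le> real (card (S ` space M)) * (real (card {1..b}) * \<delta>)"
    using Bad_sets delta unfolding Bad_def
    by (intro statistic_bound sets.finite_UN measure_UN_le_card_mult) auto
  ultimately show ?thesis
    unfolding Nstates_def xhat_def xparam_def S_def state_def Bad_def
    by (auto simp: mult_ac)
qed

end
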